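(* Let $\lambda$ be an infinite cardinal and $\mathcal C$ a small category with ${<}\lambda$-sequential colimits. Suppose that for each object $a$ of $\mathcal C$ we are given a set $Q_a$ with $|Q_a|\le\lambda$, each element of which is a set of morphisms that is generic above $a$. Then for every object $c$ of $\mathcal C$ there is a sequential-colimit-preserving functor $F:\lambda\to\mathcal C$ with $F(0)=c$ such that for every $\alpha<\lambda$ and every $X\in Q_{F(\alpha)}$ there is $\beta$ with $\alpha<\beta<\lambda$ and $F(\alpha\to\beta)\in X$.
   Context: An ordinal $\lambda$ is viewed as a category (a poset) with a unique morphism $\alpha\to\beta$ whenever $\alpha\le\beta$. A category $\mathcal C$ has ${<}\lambda$-sequential colimits if for every ordinal $\alpha<\lambda$ every diagram $\alpha\to\mathcal C$ has a colimit. A functor $F:\lambda\to\mathcal C$ is sequential-colimit-preserving if for every limit ordinal $\alpha<\lambda$, $F(\alpha)$ (with the morphisms $F(\beta\to\alpha)$, $\beta<\alpha$) is a colimit of the restricted diagram $F|_\alpha$. For an object $a$ of a small category $\mathcal C$, a set $X$ of morphisms with domain $a$ is generic above $a$ if for every morphism $f:a\to b$ there are an object $c$ and a morphism $g:b\to c$ with $g\circ f\in X$. *)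

theory Defs
  imports Main
begin

text \<open>A small category: a set of objects, a set of morphisms, domain, codomain,
  composition (Comp g f = g o f) and identities.\<close>

record ('o, 'm) cat =
  Obj :: "'o set"
  Mor :: "'m set"
  Dom :: "'m \<Rightarrow> 'o"
  Cod :: "'m \<Rightarrow> 'o"
  Comp :: "'m \<Rightarrow> 'm \<Rightarrow> 'm"
  Id :: "'o \<Rightarrow> 'm"

definition category :: "('o, 'm) cat \<Rightarrow> bool" where
  "category C \<longleftrightarrow>
     (\<forall>f\<in>Mor C. Dom C f \<in> Obj C \<and> Cod C f \<in> Obj C) \<and>
     (\<forall>a\<in>Obj C. Id C a \<in> Mor C \<and> Dom C (Id C a) = a \<and> Cod C (Id C a) = a) \<and>
     (\<forall>f\<in>Mor C. \<forall>g\<in>Mor C. Dom C g = Cod C f \<longrightarrow>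
         Comp C g f \<in> Mor C \<and> Dom C (Comp C g f) = Dom C f \<and> Cod C (Comp C g f) = Cod C g) \<and>
     (\<forall>f\<in>Mor C. Comp C (Id C (Cod C f)) f = f \<and> Comp C f (Id C (Dom C f)) = f) \<and>
     (\<forall>f\<in>Mor C. \<forall>g\<in>Mor C. \<forall>h\<in>Mor C. Dom C g = Cod C f \<longrightarrow> Dom C h = Cod C g \<longrightarrow>
         Comp C h (Comp C g f) = Comp C (Comp C h g) f)"

text \<open>A diagram indexed by the poset (I, r) (r an order relation, only pairs in I matter):
  object map D, morphism map M i j for i \<le> j.\<close>

definition pdiagram :: "('o, 'm) cat \<Rightarrow> 'i set \<Rightarrow> 'i rel \<Rightarrow> ('i \<Rightarrow> 'o) \<Rightarrow> ('i \<Rightarrow> 'i \<Rightarrow> 'm) \<Rightarrow> bool" where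
  "pdiagram C I r D M \<longleftrightarrow>
     (\<forall>i\<in>I. D i \<in> Obj C) \<and>
     (\<forall>i\<in>I. \<forall>j\<in>I. (i, j) \<in> r \<longrightarrow> M i j \<in> Mor C \<and> Dom C (M i j) = D i \<and> Cod C (M i j) = D j) \<and>
     (\<forall>i\<in>I. M i i = Id C (D i)) \<and>
     (\<forall>i\<in>I. \<forall>j\<in>I. \<forall>k\<in>I. (i, j) \<in> r \<longrightarrow> (j, k) \<in> r \<longrightarrow> Comp C (M j k) (M i j) = M i k)"

definition cocone :: "('o, 'm) cat \<Rightarrow> 'i set \<Rightarrow> 'i rel \<Rightarrow> ('i \<Rightarrow> 'o) \<Rightarrow> ('i \<Rightarrow> 'i \<Rightarrow> 'm)
    \<Rightarrow> 'o \<Rightarrow> ('i \<Rightarrow> 'm) \<Rightarrow> bool" where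
  "cocone C I r D M L \<iota> \<longleftrightarrow>
     L \<in> Obj C \<and>
     (\<forall>i\<in>I. \<iota> i \<in> Mor C \<and> Dom C (\<iota> i) = D i \<and> Cod C (\<iota> i) = L) \<and>
     (\<forall>i\<in>I. \<forall>j\<in>I. (i, j) \<in> r \<longrightarrow> Comp C (\<iota> j) (M i j) = \<iota> i)"

definition colimit :: "('o, 'm) cat \<Rightarrow> 'i set \<Rightarrow> 'i rel \<Rightarrow> ('i \<Rightarrow> 'o) \<Rightarrow> ('i \<Rightarrow> 'i \<Rightarrow> 'm)
    \<Rightarrow> 'o \<Rightarrow> ('i \<Rightarrow> 'm) \<Rightarrow> bool" where
  "colimit C I r D M L \<iota> \<longleftrightarrow>
     cocone C I r D M L \<iota> \<and>
     (\<forall>L' \<iota>'. cocone C I r D M L' \<iota>' \<longrightarrow>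
        (\<exists>!u. u \<in> Mor C \<and> Dom C u = L \<and> Cod C u = L' \<and> (\<forall>i\<in>I. Comp C u (\<iota> i) = \<iota>' i)))"

text \<open>Ordinals below \<lambda>: \<lambda> is given by a well-order r (a cardinal order, i.e. initial
  ordinal); the ordinal \<alpha> < \<lambda> is identified with the element \<alpha> \<in> Field r, i.e. with the
  initial segment underS r \<alpha> of its predecessors.\<close>

definition has_seq_colimits_below :: "('o, 'm) cat \<Rightarrow> 'a rel \<Rightarrow> bool" where
  "has_seq_colimits_below C r \<longleftrightarrow>
     (\<forall>\<alpha>\<in>Field r. \<forall>D M. pdiagram C (underS r \<alpha>) r D M \<longrightarrow>
        (\<exists>L \<iota>. colimit C (underS r \<alpha>) r D M L \<iota>))"

definition is_limit_elem :: "'a rel \<Rightarrow> 'a \<Rightarrow> bool" where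
  "is_limit_elem r \<alpha> \<longleftrightarrow> \<alpha> \<in> Field r \<and> underS r \<alpha> \<noteq> {} \<and>
     (\<forall>\<beta>\<in>underS r \<alpha>. \<exists>\<gamma>\<in>underS r \<alpha>. \<beta> \<in> underS r \<gamma>)"

definition seq_colim_preserving :: "('o, 'm) cat \<Rightarrow> 'a rel \<Rightarrow> ('a \<Rightarrow> 'o) \<Rightarrow> ('a \<Rightarrow> 'a \<Rightarrow> 'm) \<Rightarrow> bool" where
  "seq_colim_preserving C r Fo Fm \<longleftrightarrow>
     (\<forall>\<alpha>. is_limit_elem r \<alpha> \<longrightarrow> colimit C (underS r \<alpha>) r Fo Fm (Fo \<alpha>) (\<lambda>\<beta>. Fm \<beta> \<alpha>))"

definition generic_above :: "('o, 'm) cat \<Rightarrow> 'o \<Rightarrow> 'm set \<Rightarrow> bool" where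
  "generic_above C a X \<longleftrightarrow>
     X \<subseteq> {f \<in> Mor C. Dom C f = a} \<and>
     (\<forall>f\<in>Mor C. Dom C f = a \<longrightarrow>
        (\<exists>g\<in>Mor C. Dom C g = Cod C f \<and> Comp C g f \<in> X))"

end

theory Submission
  imports Defs
begin

(* The chain is built by transfinite recursion along \<lambda>: F 0 = c, at limit stages F is the colimit
   of the chain built so far, and the step from \<gamma> to \<gamma> + 1 serves one task.  Since |Q a| \<le> \<lambda>, the
   members of each Q a can be indexed by \<lambda>, and since \<lambda> \<times> \<lambda> \<times> \<lambda> has size \<lambda> there is a bookkeeping
   map \<gamma> \<mapsto> (\<delta>, i) hitting every pair (\<delta>, i) at some stage \<gamma> \<ge> \<delta>: the \<lambda> many stages carrying the
   task (\<delta>, i) cannot all lie below \<delta>, as initial segments of \<lambda> are smaller than \<lambda>.  Serving (\<delta>, i)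
   at \<gamma> means choosing g out of F \<gamma> with g \<circ> F(\<delta> \<rightarrow> \<gamma>) in the i-th member of Q (F \<delta>), which is
   possible because that set is generic above F \<delta>. *)

lemma category_Cod_Obj: "category C \<Longrightarrow> f \<in> Mor C \<Longrightarrow> Cod C f \<in> Obj C"
  unfolding category_def by blast

lemma category_Id: "category C \<Longrightarrow> a \<in> Obj C \<Longrightarrow> Id C a \<in> Mor C \<and> Dom C (Id C a) = a \<and> Cod C (Id C a) = a"
  unfolding category_def by blast

lemma category_Comp:
  "category C \<Longrightarrow> f \<in> Mor C \<Longrightarrow> g \<in> Mor C \<Longrightarrow> Dom C g = Cod C f \<Longrightarrow>
     Comp C g f \<in> Mor C \<and> Dom C (Comp C g f) = Dom C f \<and> Cod C (Comp C g f) = Cod C g"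
  unfolding category_def by blast

lemma category_Id_left: "category C \<Longrightarrow> f \<in> Mor C \<Longrightarrow> Comp C (Id C (Cod C f)) f = f"
  unfolding category_def by blast

lemma category_Id_right: "category C \<Longrightarrow> f \<in> Mor C \<Longrightarrow> Comp C f (Id C (Dom C f)) = f"
  unfolding category_def by blast

lemma category_Comp_assoc:
  "category C \<Longrightarrow> f \<in> Mor C \<Longrightarrow> g \<in> Mor C \<Longrightarrow> h \<in> Mor C \<Longrightarrow>
     Dom C g = Cod C f \<Longrightarrow> Dom C h = Cod C g \<Longrightarrow> Comp C h (Comp C g f) = Comp C (Comp C h g) f"
  unfolding category_def by blast

lemma cocone_cong:
  assumes "\<forall>i\<in>I. D i = D' i" "\<forall>i\<in>I. \<forall>j\<in>I. M i j = M' i j" "\<forall>i\<in>I. \<iota> i = \<iota>' i"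
  shows "cocone C I r D M L \<iota> = cocone C I r D' M' L \<iota>'"
  using assms unfolding cocone_def by auto

lemma colimit_cong:
  assumes "\<forall>i\<in>I. D i = D' i" "\<forall>i\<in>I. \<forall>j\<in>I. M i j = M' i j" "\<forall>i\<in>I. \<iota> i = \<iota>' i"
  shows "colimit C I r D M L \<iota> = colimit C I r D' M' L \<iota>'"
proof -
  have "cocone C I r D M L' \<kappa> = cocone C I r D' M' L' \<kappa>" for L' \<kappa>
    using assms by (intro cocone_cong) auto
  moreover have "cocone C I r D M L \<iota> = cocone C I r D' M' L \<iota>'"
    using assms by (rule cocone_cong)
  ultimately show ?thesis
    using assms(3) unfolding colimit_def by simp
qed

lemma cocone_Comp:
  assumes C: "category C" and diagram: "pdiagram C I r D M" and cocone: "cocone C I r D M L \<iota>"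
    and g: "g \<in> Mor C" "Dom C g = L"
  shows "cocone C I r D M (Cod C g) (\<lambda>i. Comp C g (\<iota> i))"
  unfolding cocone_def
proof (intro conjI ballI impI)
  show "Cod C g \<in> Obj C"
    using category_Cod_Obj[OF C g(1)] .
  fix i assume i: "i \<in> I"
  then have \<iota>: "\<iota> i \<in> Mor C" "Dom C (\<iota> i) = D i" "Cod C (\<iota> i) = L"
    using cocone unfolding cocone_def by auto
  show "Comp C g (\<iota> i) \<in> Mor C" "Dom C (Comp C g (\<iota> i)) = D i" "Cod C (Comp C g (\<iota> i)) = Cod C g"
    using category_Comp[OF C \<iota>(1) g(1)] \<iota> g by auto
  fix j assume j: "j \<in> I" and ij: "(i, j) \<in> r"
  have \<iota>j: "\<iota> j \<in> Mor C" "Dom C (\<iota> j) = D j" "Cod C (\<iota> j) = L" "Comp C (\<iota> j) (M i j) = \<iota> i"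
    using cocone i j ij unfolding cocone_def by auto
  have M: "M i j \<in> Mor C" "Cod C (M i j) = D j"
    using diagram i j ij unfolding pdiagram_def by auto
  show "Comp C (Comp C g (\<iota> j)) (M i j) = Comp C g (\<iota> i)"
    using category_Comp_assoc[OF C M(1) \<iota>j(1) g(1)] M \<iota>j g by simp
qed

lemma pdiagram_top_cocone:
  assumes "pdiagram C I r D M" "k \<in> I" "I \<subseteq> under r k"
  shows "cocone C I r D M (D k) (\<lambda>i. M i k)"
  using assms unfolding pdiagram_def cocone_def under_def by blast

lemma pdiagram_of_cocones:
  assumes C: "category C" and "trans r" "antisym r"
    and cocones: "\<forall>k\<in>I. cocone C (underS r k) r D M (D k) (\<lambda>i. M i k) \<and> M k k = Id C (D k)"
  shows "pdiagram C I r D M"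
proof -
  have Obj: "D k \<in> Obj C" and Id: "M k k = Id C (D k)" if "k \<in> I" for k
    using that cocones unfolding cocone_def by auto
  have Mor: "M i k \<in> Mor C \<and> Dom C (M i k) = D i \<and> Cod C (M i k) = D k"
    if "i \<in> I" "k \<in> I" "(i, k) \<in> r" for i k
  proof (cases "i = k")
    case True
    then show ?thesis using that Obj Id category_Id[OF C] by auto
  next
    case False
    then show ?thesis using that cocones unfolding cocone_def underS_def by auto
  qed
  have Comp: "Comp C (M j k) (M i j) = M i k"
    if "i \<in> I" "j \<in> I" "k \<in> I" "(i, j) \<in> r" "(j, k) \<in> r" for i j k
  proof (cases "j = k")
    case True
    then show ?thesis using that Mor[of i k] Id category_Id_left[OF C] by metis
  next
    case False
    show ?thesis
    proof (cases "i = j")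
      case True
      then show ?thesis using that Mor[of j k] Id category_Id_right[OF C] by metis
    next
      case False
      with \<open>j \<noteq> k\<close> that assms(2,3) have "i \<in> underS r k" "j \<in> underS r k"
        unfolding underS_def by (auto dest: transD antisymD)
      then show ?thesis
        using that cocones unfolding cocone_def by auto
    qed
  qed
  show ?thesis
    unfolding pdiagram_def using Obj Id Mor Comp by blast
qed

definition immediate_pred :: "'a rel \<Rightarrow> 'a \<Rightarrow> 'a \<Rightarrow> bool" where
  "immediate_pred r \<gamma> \<alpha> \<longleftrightarrow> \<gamma> \<in> underS r \<alpha> \<and> underS r \<alpha> = under r \<gamma>"

lemma underS_empty_if_least:
  assumes "antisym r" "\<forall>\<beta>\<in>Field r. (z, \<beta>) \<in> r"
  shows "underS r z = {}"
proof -
  have "\<beta> = z" if "(\<beta>, z) \<in> r" for \<beta>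
  proof -
    have "(z, \<beta>) \<in> r"
      using that assms(2) by (blast intro: FieldI1)
    with that show ?thesis
      by (rule antisymD[OF assms(1)])
  qed
  then show ?thesis
    unfolding underS_def by blast
qed

lemma immediate_pred_unique:
  assumes "antisym r" "immediate_pred r \<gamma> \<alpha>" "immediate_pred r \<gamma>' \<alpha>"
  shows "\<gamma> = \<gamma>'"
proof -
  have "(\<gamma>, \<gamma>') \<in> r" "(\<gamma>', \<gamma>) \<in> r"
    using assms(2,3) unfolding immediate_pred_def under_def by blast+
  with assms(1) show ?thesis
    by (rule antisymD)
qed

lemma not_immediate_pred_if_limit:
  assumes "antisym r" "is_limit_elem r \<alpha>"
  shows "\<not> immediate_pred r \<gamma> \<alpha>"
proof
  assume pred: "immediate_pred r \<gamma> \<alpha>"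
  then obtain \<gamma>' where "\<gamma>' \<in> underS r \<alpha>" "\<gamma> \<in> underS r \<gamma>'"
    using assms(2) unfolding immediate_pred_def is_limit_elem_def by blast
  with pred have "(\<gamma>', \<gamma>) \<in> r" "(\<gamma>, \<gamma>') \<in> r" "\<gamma> \<noteq> \<gamma>'"
    unfolding immediate_pred_def under_def underS_def by blast+
  with assms(1) show False
    by (blast dest: antisymD)
qed

lemma infinite_Card_order_ex_immediate_succ:
  assumes r: "Card_order r" "infinite (Field r)" and \<gamma>: "\<gamma> \<in> Field r"
  shows "\<exists>\<alpha>\<in>Field r. immediate_pred r \<gamma> \<alpha>"
proof -
  interpret wo_rel r
    using r(1) by (rule Card_order_wo_rel)
  have above: "AboveS {\<gamma>} \<noteq> {}"
    using infinite_Card_order_limit[OF r \<gamma>] unfolding AboveS_def by blast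
  have sub: "{\<gamma>} \<subseteq> Field r"
    using \<gamma> by simp
  have suc: "suc {\<gamma>} \<in> Field r" "suc {\<gamma>} \<noteq> \<gamma>" "(\<gamma>, suc {\<gamma>}) \<in> r"
    "\<And>\<beta>. \<beta> \<in> AboveS {\<gamma>} \<Longrightarrow> (suc {\<gamma>}, \<beta>) \<in> r"
    using suc_inField[OF sub above] suc_greater[OF sub above] suc_least_AboveS by simp_all
  have "underS (suc {\<gamma>}) = under \<gamma>"
  proof
    show "underS (suc {\<gamma>}) \<subseteq> under \<gamma>"
    proof
      fix \<beta> assume \<beta>: "\<beta> \<in> underS (suc {\<gamma>})"
      show "\<beta> \<in> under \<gamma>"
      proof (rule ccontr)
        assume not_under: "\<beta> \<notin> under \<gamma>"
        have \<beta>_Field: "\<beta> \<in> Field r"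
          using \<beta> underS_Field by fast
        have "\<beta> \<noteq> \<gamma>"
          using not_under Refl_under_in[OF REFL \<gamma>] by blast
        moreover have "(\<gamma>, \<beta>) \<in> r"
          using TOTALS \<beta>_Field \<gamma> not_under unfolding under_def by blast
        ultimately have "(suc {\<gamma>}, \<beta>) \<in> r"
          using suc(4) \<beta>_Field unfolding AboveS_def by blast
        with \<beta> show False
          using antisymD[OF ANTISYM, of "suc {\<gamma>}" \<beta>] unfolding underS_def by auto
      qed
    qed
    show "under \<gamma> \<subseteq> underS (suc {\<gamma>})"
      using suc(2,3) transD[OF TRANS] antisymD[OF ANTISYM] unfolding under_def underS_def by blast
  qed
  moreover have "\<gamma> \<in> underS (suc {\<gamma>})"
    using suc(2,3) unfolding underS_def by auto
  ultimately show ?thesis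
    using suc(1) unfolding immediate_pred_def by blast
qed

lemma card_of_ordLeq_Card_order_surj:
  assumes "Card_order r" "(card_of A, r) \<in> ordLeq"
  shows "\<exists>e. A \<subseteq> e ` Field r"
proof -
  have "(card_of A, card_of (Field r)) \<in> ordLeq"
    using assms(2) ordIso_symmetric[OF card_of_Field_ordIso[OF assms(1)]] by (rule ordLeq_ordIso_trans)
  then obtain f where f: "inj_on f A" "f ` A \<subseteq> Field r"
    using card_of_ordLeq[of A "Field r"] by blast
  have "A \<subseteq> inv_into A f ` Field r"
  proof
    fix x assume "x \<in> A"
    then have "x = inv_into A f (f x)" "f x \<in> Field r"
      using f by (simp_all add: inv_into_f_f image_subset_iff)
    then show "x \<in> inv_into A f ` Field r"
      by (rule image_eqI)
  qed
  then show ?thesis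
    by blast
qed

lemma Card_order_inj_image_unbounded:
  assumes r: "Card_order r" and f: "inj_on f (Field r)" "f ` Field r \<subseteq> Field r"
    and \<delta>: "\<delta> \<in> Field r"
  shows "\<exists>j\<in>Field r. (\<delta>, f j) \<in> r"
proof (rule ccontr)
  assume not_above: "\<not> ?thesis"
  have wo: "wo_rel r"
    using r by (rule Card_order_wo_rel)
  have "f j \<in> underS r \<delta>" if j: "j \<in> Field r" for j
  proof -
    have "f j \<in> Field r" "(\<delta>, f j) \<notin> r"
      using f(2) j not_above by auto
    then show ?thesis
      using wo_rel.TOTALS[OF wo] wo_rel.REFL[OF wo] \<delta> unfolding underS_def refl_on_def by blast
  qed
  then have "f ` Field r \<subseteq> underS r \<delta>"
    by blast
  with f(1) have "(card_of (Field r), card_of (underS r \<delta>)) \<in> ordLeq"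
    using card_of_ordLeq[of "Field r" "underS r \<delta>"] by blast
  then have "(card_of (Field r), r) \<in> ordLess"
    using card_of_underS[OF r \<delta>] by (rule ordLeq_ordLess_trans)
  then show False
    using card_of_Field_ordIso[OF r] not_ordLess_ordIso by blast
qed

lemma infinite_Card_order_bookkeeping:
  assumes r: "Card_order r" "infinite (Field r)"
  shows "\<exists>task. \<forall>\<delta>\<in>Field r. \<forall>i\<in>Field r. \<exists>\<gamma>. (\<delta>, \<gamma>) \<in> r \<and> task \<gamma> = (\<delta>, i)"
proof -
  let ?F = "Field r"
  obtain b where b: "bij_betw b (?F \<times> ?F) ?F"
    using card_of_Times_same_infinite[OF r(2)] card_of_ordIso[of "?F \<times> ?F" ?F] by blast
  define h where "h = (\<lambda>(\<delta>, i, j). b (\<delta>, b (i, j)))"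
  have b_Field: "b (x, y) \<in> ?F" if "x \<in> ?F" "y \<in> ?F" for x y
    using b that unfolding bij_betw_def by blast
  have b_inj: "x = x' \<and> y = y'"
    if "b (x, y) = b (x', y')" "x \<in> ?F" "y \<in> ?F" "x' \<in> ?F" "y' \<in> ?F" for x y x' y'
    using b that unfolding bij_betw_def inj_on_def by blast
  have h_inj: "inj_on h (?F \<times> ?F \<times> ?F)"
  proof (rule inj_onI)
    fix p q assume p: "p \<in> ?F \<times> ?F \<times> ?F" and q: "q \<in> ?F \<times> ?F \<times> ?F" and "h p = h q"
    obtain \<delta> i j \<delta>' i' j' where pq: "p = (\<delta>, i, j)" "q = (\<delta>', i', j')"
      by (cases p, cases q) blast
    have mem: "\<delta> \<in> ?F" "i \<in> ?F" "j \<in> ?F" "\<delta>' \<in> ?F" "i' \<in> ?F" "j' \<in> ?F"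
      using p q unfolding pq by simp_all
    have "b (\<delta>, b (i, j)) = b (\<delta>', b (i', j'))"
      using \<open>h p = h q\<close> unfolding pq h_def by simp
    then have "\<delta> = \<delta>' \<and> b (i, j) = b (i', j')"
      using mem by (intro b_inj b_Field)
    moreover from this have "i = i' \<and> j = j'"
      using mem by (intro b_inj) simp_all
    ultimately show "p = q"
      unfolding pq by simp
  qed
  have h_Field: "h ` (?F \<times> ?F \<times> ?F) \<subseteq> ?F"
    unfolding h_def using b_Field by (simp add: image_subset_iff)
  define task where "task \<gamma> = (case inv_into (?F \<times> ?F \<times> ?F) h \<gamma> of (\<delta>, i, _) \<Rightarrow> (\<delta>, i))" for \<gamma>
  have "\<exists>\<gamma>. (\<delta>, \<gamma>) \<in> r \<and> task \<gamma> = (\<delta>, i)" if \<delta>: "\<delta> \<in> ?F" and i: "i \<in> ?F" for \<delta> i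
  proof -
    have slice_inj: "inj_on (\<lambda>j. h (\<delta>, i, j)) ?F"
    proof (rule inj_onI)
      fix j j' assume "j \<in> ?F" "j' \<in> ?F" "h (\<delta>, i, j) = h (\<delta>, i, j')"
      then have "(\<delta>, i, j) = (\<delta>, i, j')"
        using \<delta> i by (intro inj_onD[OF h_inj]) auto
      then show "j = j'"
        by simp
    qed
    have slice_Field: "(\<lambda>j. h (\<delta>, i, j)) ` ?F \<subseteq> ?F"
      using h_Field \<delta> i unfolding image_subset_iff by blast
    obtain j where j: "j \<in> ?F" and above: "(\<delta>, h (\<delta>, i, j)) \<in> r"
      using Card_order_inj_image_unbounded[OF r(1) slice_inj slice_Field \<delta>] by blast
    have "task (h (\<delta>, i, j)) = (\<delta>, i)"
      using inv_into_f_f[OF h_inj] \<delta> i j unfolding task_def by simp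
    with above show ?thesis
      by blast
  qed
  then show ?thesis
    by blast
qed

locale chain_construction = wo_rel r
  for r :: "'a rel" +
  fixes C :: "('o, 'm) cat" and c :: 'o and step :: "'a \<Rightarrow> 'o \<Rightarrow> ('a \<Rightarrow> 'm) \<Rightarrow> 'm"
  assumes category: "category C"
    and colimits: "has_seq_colimits_below C r"
    and c_Obj: "c \<in> Obj C"
    and step_Mor: "\<And>\<gamma> a \<iota>. a \<in> Obj C \<Longrightarrow> step \<gamma> a \<iota> \<in> Mor C \<and> Dom C (step \<gamma> a \<iota>) = a"
begin

(* Stage \<alpha> of the recursion records the object F \<alpha> together with all morphisms F(\<beta> \<rightarrow> \<alpha>). *)
definition extend :: "('a \<Rightarrow> 'o \<times> ('a \<Rightarrow> 'm)) \<Rightarrow> 'a \<Rightarrow> 'o \<times> ('a \<Rightarrow> 'm)" where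
  "extend f \<alpha> =
    (if underS \<alpha> = {} then (c, \<lambda>\<beta>. Id C c)
     else if \<exists>\<gamma>. immediate_pred r \<gamma> \<alpha> then
       (let \<gamma> = SOME \<gamma>. immediate_pred r \<gamma> \<alpha>; g = step \<gamma> (fst (f \<gamma>)) (snd (f \<gamma>))
        in (Cod C g, \<lambda>\<beta>. if \<beta> = \<alpha> then Id C (Cod C g) else Comp C g (snd (f \<gamma>) \<beta>)))
     else
       (let LI = SOME LI. colimit C (underS \<alpha>) r (\<lambda>\<beta>. fst (f \<beta>)) (\<lambda>\<beta> \<beta>'. snd (f \<beta>') \<beta>) (fst LI) (snd LI)
        in (fst LI, \<lambda>\<beta>. if \<beta> = \<alpha> then Id C (fst LI) else snd LI \<beta>)))"

lemma adm_extend: "adm_wo extend"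
  unfolding adm_wo_def
proof (intro allI impI)
  fix f g :: "'a \<Rightarrow> 'o \<times> ('a \<Rightarrow> 'm)" and \<alpha>
  assume agree: "\<forall>\<beta>\<in>underS \<alpha>. f \<beta> = g \<beta>"
  show "extend f \<alpha> = extend g \<alpha>"
  proof (cases "\<exists>\<gamma>. immediate_pred r \<gamma> \<alpha>")
    case True
    define \<gamma> where "\<gamma> = (SOME \<gamma>. immediate_pred r \<gamma> \<alpha>)"
    have "\<gamma> \<in> underS \<alpha>"
      using True unfolding \<gamma>_def immediate_pred_def by (rule someI2_ex) blast
    then have "f \<gamma> = g \<gamma>"
      using agree by blast
    with True show ?thesis
      unfolding extend_def Let_def \<gamma>_def[symmetric] by (simp only: if_True)
  next
    case False
    have "colimit C (underS \<alpha>) r (\<lambda>\<beta>. fst (f \<beta>)) (\<lambda>\<beta> \<beta>'. snd (f \<beta>') \<beta>) =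
        colimit C (underS \<alpha>) r (\<lambda>\<beta>. fst (g \<beta>)) (\<lambda>\<beta> \<beta>'. snd (g \<beta>') \<beta>)"
      using agree by (intro ext colimit_cong) simp_all
    with False show ?thesis
      unfolding extend_def by simp
  qed
qed

definition chain :: "'a \<Rightarrow> 'o \<times> ('a \<Rightarrow> 'm)" where
  "chain = worec extend"

definition Fo :: "'a \<Rightarrow> 'o" where
  "Fo \<alpha> = fst (chain \<alpha>)"

definition Fm :: "'a \<Rightarrow> 'a \<Rightarrow> 'm" where
  "Fm \<beta> \<alpha> = snd (chain \<alpha>) \<beta>"

lemma chain_unfold: "chain \<alpha> = extend chain \<alpha>"
  using worec_fixpoint[OF adm_extend] unfolding chain_def by metis

lemma chain_bottom:
  assumes "underS \<alpha> = {}"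
  shows "Fo \<alpha> = c" "Fm \<beta> \<alpha> = Id C c"
  using assms unfolding Fo_def Fm_def by (subst chain_unfold, simp add: extend_def)+

lemma chain_succ:
  assumes pred: "immediate_pred r \<gamma> \<alpha>"
  defines "g \<equiv> step \<gamma> (Fo \<gamma>) (\<lambda>\<beta>. Fm \<beta> \<gamma>)"
  shows "Fo \<alpha> = Cod C g" "Fm \<beta> \<alpha> = (if \<beta> = \<alpha> then Id C (Fo \<alpha>) else Comp C g (Fm \<beta> \<gamma>))"
proof -
  have nonempty: "underS \<alpha> \<noteq> {}"
    using pred unfolding immediate_pred_def by blast
  have some: "(SOME \<gamma>. immediate_pred r \<gamma> \<alpha>) = \<gamma>"
    using pred immediate_pred_unique[OF ANTISYM] by blast
  have Fm_\<gamma>: "snd (chain \<gamma>) = (\<lambda>\<beta>. Fm \<beta> \<gamma>)"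
    unfolding Fm_def by simp
  have "chain \<alpha> = (Cod C g, \<lambda>\<beta>. if \<beta> = \<alpha> then Id C (Cod C g) else Comp C g (Fm \<beta> \<gamma>))"
    using nonempty pred
    by (subst chain_unfold) (auto simp: extend_def Let_def some Fm_\<gamma> g_def Fo_def)
  then show "Fo \<alpha> = Cod C g" "Fm \<beta> \<alpha> = (if \<beta> = \<alpha> then Id C (Fo \<alpha>) else Comp C g (Fm \<beta> \<gamma>))"
    unfolding Fo_def Fm_def by simp_all
qed

lemma chain_limit:
  assumes "underS \<alpha> \<noteq> {}" "\<nexists>\<gamma>. immediate_pred r \<gamma> \<alpha>"
    and "\<exists>L \<iota>. colimit C (underS \<alpha>) r Fo Fm L \<iota>"
  shows "colimit C (underS \<alpha>) r Fo Fm (Fo \<alpha>) (\<lambda>\<beta>. Fm \<beta> \<alpha>)" "Fm \<alpha> \<alpha> = Id C (Fo \<alpha>)"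
proof -
  have Fo_eq: "Fo = (\<lambda>\<beta>. fst (chain \<beta>))" and Fm_eq: "Fm = (\<lambda>\<beta> \<beta>'. snd (chain \<beta>') \<beta>)"
    by (simp_all add: fun_eq_iff Fo_def Fm_def)
  define LI where "LI = (SOME LI. colimit C (underS \<alpha>) r Fo Fm (fst LI) (snd LI))"
  obtain L \<iota> where "colimit C (underS \<alpha>) r Fo Fm L \<iota>"
    using assms(3) by blast
  then have "colimit C (underS \<alpha>) r Fo Fm (fst (L, \<iota>)) (snd (L, \<iota>))"
    by simp
  then have colim: "colimit C (underS \<alpha>) r Fo Fm (fst LI) (snd LI)"
    unfolding LI_def by (rule someI)
  have chain: "chain \<alpha> = (fst LI, \<lambda>\<beta>. if \<beta> = \<alpha> then Id C (fst LI) else snd LI \<beta>)"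
    using assms(1,2) unfolding LI_def Fo_eq Fm_eq by (subst chain_unfold) (simp add: extend_def Let_def)
  then have "Fo \<alpha> = fst LI" "\<forall>\<beta>\<in>underS \<alpha>. Fm \<beta> \<alpha> = snd LI \<beta>" "Fm \<alpha> \<alpha> = Id C (Fo \<alpha>)"
    unfolding Fo_def Fm_def underS_def by simp_all
  with colim show "colimit C (underS \<alpha>) r Fo Fm (Fo \<alpha>) (\<lambda>\<beta>. Fm \<beta> \<alpha>)" "Fm \<alpha> \<alpha> = Id C (Fo \<alpha>)"
    using colimit_cong[of "underS \<alpha>" Fo Fo Fm Fm "snd LI" "\<lambda>\<beta>. Fm \<beta> \<alpha>"] by simp_all
qed

lemma chain_cocone: "cocone C (underS \<alpha>) r Fo Fm (Fo \<alpha>) (\<lambda>\<beta>. Fm \<beta> \<alpha>) \<and> Fm \<alpha> \<alpha> = Id C (Fo \<alpha>)"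
proof (induction \<alpha> rule: well_order_induct)
  case (1 \<alpha>)
  then have IH: "\<forall>\<beta>\<in>underS \<alpha>. cocone C (underS \<beta>) r Fo Fm (Fo \<beta>) (\<lambda>\<beta>'. Fm \<beta>' \<beta>) \<and> Fm \<beta> \<beta> = Id C (Fo \<beta>)"
    unfolding underS_def by blast
  have diagram: "pdiagram C (underS \<alpha>) r Fo Fm"
    using category TRANS ANTISYM IH by (rule pdiagram_of_cocones)
  consider (bottom) "underS \<alpha> = {}"
    | (succ) \<gamma> where "immediate_pred r \<gamma> \<alpha>"
    | (limit) "underS \<alpha> \<noteq> {}" "\<nexists>\<gamma>. immediate_pred r \<gamma> \<alpha>"
    by blast
  then show ?case
  proof cases
    case bottom
    then show ?thesis
      using chain_bottom c_Obj unfolding cocone_def by simp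
  next
    case (succ \<gamma>)
    define g where "g = step \<gamma> (Fo \<gamma>) (\<lambda>\<beta>. Fm \<beta> \<gamma>)"
    have \<gamma>: "\<gamma> \<in> underS \<alpha>" and under: "underS \<alpha> = under \<gamma>"
      using succ unfolding immediate_pred_def by blast+
    then have "Fo \<gamma> \<in> Obj C"
      using IH unfolding cocone_def by blast
    then have g: "g \<in> Mor C" "Dom C g = Fo \<gamma>"
      using step_Mor unfolding g_def by blast+
    have "cocone C (underS \<alpha>) r Fo Fm (Fo \<gamma>) (\<lambda>\<beta>. Fm \<beta> \<gamma>)"
      using pdiagram_top_cocone[OF diagram \<gamma>] under by simp
    then have "cocone C (underS \<alpha>) r Fo Fm (Cod C g) (\<lambda>\<beta>. Comp C g (Fm \<beta> \<gamma>))"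
      using cocone_Comp[OF category diagram _ g] by blast
    moreover have "\<forall>\<beta>\<in>underS \<alpha>. Comp C g (Fm \<beta> \<gamma>) = Fm \<beta> \<alpha>"
      using chain_succ(2)[OF succ] unfolding g_def underS_def by simp
    ultimately have "cocone C (underS \<alpha>) r Fo Fm (Cod C g) (\<lambda>\<beta>. Fm \<beta> \<alpha>)"
      using cocone_cong[of "underS \<alpha>" Fo Fo Fm Fm "\<lambda>\<beta>. Comp C g (Fm \<beta> \<gamma>)" "\<lambda>\<beta>. Fm \<beta> \<alpha>"] by blast
    moreover have "Fo \<alpha> = Cod C g" "Fm \<alpha> \<alpha> = Id C (Fo \<alpha>)"
      using chain_succ(1)[OF succ] chain_succ(2)[OF succ, of \<alpha>] unfolding g_def by simp_all
    ultimately show ?thesis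
      by simp
  next
    case limit
    then have "\<alpha> \<in> Field r"
      unfolding underS_def Field_def by blast
    then obtain L \<iota> where "colimit C (underS \<alpha>) r Fo Fm L \<iota>"
      using colimits diagram unfolding has_seq_colimits_below_def by blast
    then show ?thesis
      using chain_limit[OF limit] unfolding colimit_def by blast
  qed
qed

lemma chain_pdiagram: "pdiagram C I r Fo Fm"
  using category TRANS ANTISYM by (rule pdiagram_of_cocones) (use chain_cocone in blast)

lemma chain_seq_colim_preserving: "seq_colim_preserving C r Fo Fm"
  unfolding seq_colim_preserving_def
proof (intro allI impI)
  fix \<alpha> assume limit: "is_limit_elem r \<alpha>"
  then obtain L \<iota> where "colimit C (underS \<alpha>) r Fo Fm L \<iota>"
    using colimits chain_pdiagram unfolding has_seq_colimits_below_def is_limit_elem_def by blast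
  moreover have "underS \<alpha> \<noteq> {}"
    using limit unfolding is_limit_elem_def by blast
  ultimately show "colimit C (underS \<alpha>) r Fo Fm (Fo \<alpha>) (\<lambda>\<beta>. Fm \<beta> \<alpha>)"
    using chain_limit not_immediate_pred_if_limit[OF ANTISYM limit] by blast
qed

lemma chain_succ_step:
  assumes "immediate_pred r \<gamma> \<alpha>"
  shows "Fm \<gamma> \<alpha> = step \<gamma> (Fo \<gamma>) (\<lambda>\<beta>. Fm \<beta> \<gamma>)"
proof -
  have "\<gamma> \<noteq> \<alpha>"
    using assms unfolding immediate_pred_def underS_def by blast
  moreover have "Fo \<gamma> \<in> Obj C" "Fm \<gamma> \<gamma> = Id C (Fo \<gamma>)"
    using chain_cocone[of \<gamma>] unfolding cocone_def by blast+
  ultimately show ?thesis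
    using chain_succ(2)[OF assms, of \<gamma>] step_Mor category_Id_right[OF category] by metis
qed

end

lemma seq_colim_preserving_chain_exists:
  assumes "Well_order r" "category C" "has_seq_colimits_below C r" "c \<in> Obj C"
    and "\<And>\<gamma> a \<iota>. a \<in> Obj C \<Longrightarrow> step \<gamma> a \<iota> \<in> Mor C \<and> Dom C (step \<gamma> a \<iota>) = a"
  shows "\<exists>Fo Fm. pdiagram C (Field r) r Fo Fm \<and> (\<forall>\<alpha>. underS r \<alpha> = {} \<longrightarrow> Fo \<alpha> = c) \<and>
           seq_colim_preserving C r Fo Fm \<and>
           (\<forall>\<gamma> \<alpha>. immediate_pred r \<gamma> \<alpha> \<longrightarrow> Fm \<gamma> \<alpha> = step \<gamma> (Fo \<gamma>) (\<lambda>\<beta>. Fm \<beta> \<gamma>))"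
proof -
  interpret chain_construction r C c step
    using assms by unfold_locales (simp_all add: wo_rel_def)
  show ?thesis
    using chain_pdiagram chain_bottom(1) chain_seq_colim_preserving chain_succ_step by blast
qed

definition generic_step ::
    "('o, 'm) cat \<Rightarrow> ('o \<Rightarrow> 'i \<Rightarrow> 'm set) \<Rightarrow> ('a \<Rightarrow> 'a \<times> 'i) \<Rightarrow> 'a \<Rightarrow> 'o \<Rightarrow> ('a \<Rightarrow> 'm) \<Rightarrow> 'm" where
  "generic_step C enum task \<gamma> a \<iota> =
    (case task \<gamma> of (\<delta>, i) \<Rightarrow>
      let P = (\<lambda>g. g \<in> Mor C \<and> Dom C g = a \<and> Comp C g (\<iota> \<delta>) \<in> enum (Dom C (\<iota> \<delta>)) i)
      in if Ex P then Eps P else Id C a)"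

lemma generic_step_Mor:
  assumes C: "category C" and a: "a \<in> Obj C"
  shows "generic_step C enum task \<gamma> a \<iota> \<in> Mor C \<and> Dom C (generic_step C enum task \<gamma> a \<iota>) = a"
proof -
  obtain \<delta> i where task: "task \<gamma> = (\<delta>, i)"
    by (cases "task \<gamma>")
  let ?P = "\<lambda>g. g \<in> Mor C \<and> Dom C g = a \<and> Comp C g (\<iota> \<delta>) \<in> enum (Dom C (\<iota> \<delta>)) i"
  have step: "generic_step C enum task \<gamma> a \<iota> = (if Ex ?P then Eps ?P else Id C a)"
    unfolding generic_step_def task Let_def by simp
  show ?thesis
  proof (cases "Ex ?P")
    case True
    then have "?P (Eps ?P)"
      by (rule someI_ex)
    with True show ?thesis
      unfolding step by simp
  next
    case False
    then have "generic_step C enum task \<gamma> a \<iota> = Id C a"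
      unfolding step by (rule if_not_P)
    then show ?thesis
      using category_Id[OF C a] by simp
  qed
qed

lemma generic_step_meets:
  assumes task: "task \<gamma> = (\<delta>, i)" and \<iota>: "\<iota> \<delta> \<in> Mor C" "Cod C (\<iota> \<delta>) = a"
    and generic: "generic_above C (Dom C (\<iota> \<delta>)) (enum (Dom C (\<iota> \<delta>)) i)"
  shows "Comp C (generic_step C enum task \<gamma> a \<iota>) (\<iota> \<delta>) \<in> enum (Dom C (\<iota> \<delta>)) i"
proof -
  let ?P = "\<lambda>g. g \<in> Mor C \<and> Dom C g = a \<and> Comp C g (\<iota> \<delta>) \<in> enum (Dom C (\<iota> \<delta>)) i"
  have step: "generic_step C enum task \<gamma> a \<iota> = (if Ex ?P then Eps ?P else Id C a)"
    unfolding generic_step_def task Let_def by simp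
  have "Ex ?P"
    using \<iota> generic unfolding generic_above_def by blast
  then have "?P (Eps ?P)"
    by (rule someI_ex)
  with \<open>Ex ?P\<close> show ?thesis
    unfolding step by simp
qed

lemma generic_step_chain_meets:
  assumes r: "Card_order r" "infinite (Field r)" and diagram: "pdiagram C (Field r) r Fo Fm"
    and succ: "\<forall>\<gamma> \<alpha>. immediate_pred r \<gamma> \<alpha> \<longrightarrow> Fm \<gamma> \<alpha> = generic_step C enum task \<gamma> (Fo \<gamma>) (\<lambda>\<beta>. Fm \<beta> \<gamma>)"
    and \<delta>\<gamma>: "(\<delta>, \<gamma>) \<in> r" and task: "task \<gamma> = (\<delta>, i)"
    and generic: "generic_above C (Fo \<delta>) (enum (Fo \<delta>) i)"
  shows "\<exists>\<beta>\<in>Field r. \<delta> \<noteq> \<beta> \<and> (\<delta>, \<beta>) \<in> r \<and> Fm \<delta> \<beta> \<in> enum (Fo \<delta>) i"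
proof -
  have wo: "wo_rel r"
    using r(1) by (rule Card_order_wo_rel)
  have \<delta>: "\<delta> \<in> Field r" and \<gamma>: "\<gamma> \<in> Field r"
    using \<delta>\<gamma> by (auto intro: FieldI1 FieldI2)
  obtain \<beta> where \<beta>: "\<beta> \<in> Field r" and pred: "immediate_pred r \<gamma> \<beta>"
    using infinite_Card_order_ex_immediate_succ[OF r \<gamma>] by blast
  then have "(\<gamma>, \<beta>) \<in> r" "\<gamma> \<noteq> \<beta>"
    unfolding immediate_pred_def underS_def by auto
  with \<delta>\<gamma> have \<delta>\<beta>: "(\<delta>, \<beta>) \<in> r" "\<delta> \<noteq> \<beta>"
    using transD[OF wo_rel.TRANS[OF wo]] antisymD[OF wo_rel.ANTISYM[OF wo]] by blast+
  have Fm_\<delta>\<gamma>: "Fm \<delta> \<gamma> \<in> Mor C" "Dom C (Fm \<delta> \<gamma>) = Fo \<delta>" "Cod C (Fm \<delta> \<gamma>) = Fo \<gamma>"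
    using diagram \<delta> \<gamma> \<delta>\<gamma> unfolding pdiagram_def by blast+
  have "Fm \<delta> \<beta> = Comp C (Fm \<gamma> \<beta>) (Fm \<delta> \<gamma>)"
    using diagram \<delta> \<gamma> \<beta> \<delta>\<gamma> \<open>(\<gamma>, \<beta>) \<in> r\<close> unfolding pdiagram_def by metis
  also have "\<dots> = Comp C (generic_step C enum task \<gamma> (Fo \<gamma>) (\<lambda>\<beta>. Fm \<beta> \<gamma>)) (Fm \<delta> \<gamma>)"
    using succ pred by simp
  also have "\<dots> \<in> enum (Fo \<delta>) i"
    using generic_step_meets[of task \<gamma> \<delta> i "\<lambda>\<beta>. Fm \<beta> \<gamma>" C "Fo \<gamma>" enum] task Fm_\<delta>\<gamma> generic by simp
  finally show ?thesis
    using \<beta> \<delta>\<beta> by blast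
qed

theorem proposition3p3:
  fixes C :: "('o, 'm) cat" and r :: "'a rel" and Q :: "'o \<Rightarrow> 'm set set" and c :: 'o
  assumes "Card_order r" and "infinite (Field r)"
    and "category C"
    and "has_seq_colimits_below C r"
    and "\<forall>a\<in>Obj C. (card_of (Q a), r) \<in> ordLeq"
    and "\<forall>a\<in>Obj C. \<forall>X\<in>Q a. generic_above C a X"
    and "c \<in> Obj C"
  shows "\<exists>Fo Fm. pdiagram C (Field r) r Fo Fm \<and>
           (\<forall>z\<in>Field r. (\<forall>\<beta>\<in>Field r. (z, \<beta>) \<in> r) \<longrightarrow> Fo z = c) \<and>
           seq_colim_preserving C r Fo Fm \<and>
           (\<forall>\<alpha>\<in>Field r. \<forall>X\<in>Q (Fo \<alpha>). \<exists>\<beta>\<in>Field r. \<alpha> \<noteq> \<beta> \<and> (\<alpha>, \<beta>) \<in> r \<and> Fm \<alpha> \<beta> \<in> X)"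
proof -
  have wo: "wo_rel r"
    using assms(1) by (rule Card_order_wo_rel)
  have "\<forall>a\<in>Obj C. \<exists>e. Q a \<subseteq> e ` Field r"
    using card_of_ordLeq_Card_order_surj[OF assms(1)] assms(5) by blast
  from bchoice[OF this] obtain enum where enum: "\<forall>a\<in>Obj C. Q a \<subseteq> enum a ` Field r"
    by blast
  obtain task where task: "\<forall>\<delta>\<in>Field r. \<forall>i\<in>Field r. \<exists>\<gamma>. (\<delta>, \<gamma>) \<in> r \<and> task \<gamma> = (\<delta>, i)"
    using infinite_Card_order_bookkeeping[OF assms(1,2)] by blast
  obtain Fo Fm where diagram: "pdiagram C (Field r) r Fo Fm"
    and bottom: "\<forall>\<alpha>. underS r \<alpha> = {} \<longrightarrow> Fo \<alpha> = c" and colim: "seq_colim_preserving C r Fo Fm"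
    and succ: "\<forall>\<gamma> \<alpha>. immediate_pred r \<gamma> \<alpha> \<longrightarrow> Fm \<gamma> \<alpha> = generic_step C enum task \<gamma> (Fo \<gamma>) (\<lambda>\<beta>. Fm \<beta> \<gamma>)"
    using seq_colim_preserving_chain_exists[where step = "generic_step C enum task",
        OF wo_rel.WELL[OF wo] assms(3,4,7) generic_step_Mor[OF assms(3)]]
    by blast
  have "\<exists>\<beta>\<in>Field r. \<alpha> \<noteq> \<beta> \<and> (\<alpha>, \<beta>) \<in> r \<and> Fm \<alpha> \<beta> \<in> X" if \<alpha>: "\<alpha> \<in> Field r" and X: "X \<in> Q (Fo \<alpha>)" for \<alpha> X
  proof -
    have Fo: "Fo \<alpha> \<in> Obj C"
      using diagram \<alpha> unfolding pdiagram_def by blast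
    then obtain i where i: "i \<in> Field r" and X_eq: "X = enum (Fo \<alpha>) i"
      using enum X by blast
    obtain \<gamma> where "(\<alpha>, \<gamma>) \<in> r" "task \<gamma> = (\<alpha>, i)"
      using task \<alpha> i by blast
    moreover have "generic_above C (Fo \<alpha>) (enum (Fo \<alpha>) i)"
      using assms(6) Fo X unfolding X_eq by blast
    ultimately show ?thesis
      unfolding X_eq by (rule generic_step_chain_meets[OF assms(1,2) diagram succ])
  qed
  moreover have "Fo z = c" if "\<forall>\<beta>\<in>Field r. (z, \<beta>) \<in> r" for z
    using bottom underS_empty_if_least[OF wo_rel.ANTISYM[OF wo] that] by blast
  ultimately show ?thesis
    using diagram colim by blast
qed

end
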